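(* Fix integers $l\ge 2$ and $l'\ge 2$. Consider an attribute $A$ with concepts $c_1,\dots,c_l$ and an attribute $A'$ with concepts $c'_1,\dots,c'_{l'}$. For each dimension $d$, let $\{v_{i,j}: 1\le i\le l,\ 1\le j\le l'\}$ be independent random vectors with $v_{i,j}\sim N(\mathbf{0},I_d)$ (the representation of the composite concept $\{c_i,c'_j\}$). Define $$\hat v_i=\frac{1}{l'}\sum_{j=1}^{l'}v_{i,j},\qquad \hat v'_j=\frac{1}{l}\sum_{i=1}^{l}v_{i,j},\qquad \mu=\frac{1}{ll'}\sum_{i=1}^{l}\sum_{j=1}^{l'}v_{i,j},$$ and, for a positive scalar $\sigma>0$ (which may depend on $d$), the centered base-concept representations $$v_i=\frac{\hat v_i-\mu}{\sigma}\ (1\le i\le l),\qquad v'_j=\frac{\hat v'_j-\mu}{\sigma}\ (1\le j\le l').$$ Then: (1) Almost surely, there exist $i\neq i'$ in $\{1,\dots,l\}$ with $\langle v_i,v_{i'}\rangle\neq 0$, and there exist $j\neq j'$ in $\{1,\dots,l'\}$ with $\langle v'_j,v'_{j'}\rangle\neq 0$; i.e., within each attribute some pair of base-concept representations is non-orthogonal. (2) For every $i\in\{1,\dots,l\}$, $j\in\{1,\dots,l'\}$ and every $\epsilon>0$, $$\lim_{d\to\infty}\mathbb{P}\Big[v_i\neq 0,\ v'_j\neq 0,\ \Big|\frac{\langle v_i,v'_j\rangle}{\|v_i\|\,\|v'_j\|}\Big|\le\epsilon\Big]=1,$$ i.e., base-concept representations from different attributes are orthogonal with high probability as $d\to\i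nfty$.
   Context: $N(\mathbf{0},I_d)$ denotes the standard (spherical) Gaussian distribution on $\mathbb{R}^d$. $l$ and $l'$ are held fixed as $d\to\infty$. *)

theory Defs
  imports "HOL-Probability.Probability"
begin

text \<open>Vectors in R^d are represented as functions nat => real, only the
coordinates k < d being relevant.\<close>

definition ipd :: "nat \<Rightarrow> (nat \<Rightarrow> real) \<Rightarrow> (nat \<Rightarrow> real) \<Rightarrow> real" where
  "ipd d x y = (\<Sum>k<d. x k * y k)"

definition vnorm :: "nat \<Rightarrow> (nat \<Rightarrow> real) \<Rightarrow> real" where
  "vnorm d x = sqrt (ipd d x x)"

text \<open>Sample space for dimension d: the family of independent standard Gaussian
coordinates, omega (i,j,k) being coordinate k of v_{i,j} (0-based indices).\<close>

definition gauss_space :: "nat \<Rightarrow> nat \<Rightarrow> nat \<Rightarrow> (nat \<times> nat \<times> nat \<Rightarrow> real) measure" where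
  "gauss_space l l' d =
     PiM ({..<l} \<times> {..<l'} \<times> {..<d}) (\<lambda>_. density lborel std_normal_density)"

definition cvec :: "(nat \<times> nat \<times> nat \<Rightarrow> real) \<Rightarrow> nat \<Rightarrow> nat \<Rightarrow> nat \<Rightarrow> real" where
  "cvec \<omega> i j = (\<lambda>k. \<omega> (i, j, k))"

definition vhat :: "nat \<Rightarrow> (nat \<times> nat \<times> nat \<Rightarrow> real) \<Rightarrow> nat \<Rightarrow> nat \<Rightarrow> real" where
  "vhat l' \<omega> i = (\<lambda>k. (1 / real l') * (\<Sum>j<l'. cvec \<omega> i j k))"

definition vhat' :: "nat \<Rightarrow> (nat \<times> nat \<times> nat \<Rightarrow> real) \<Rightarrow> nat \<Rightarrow> nat \<Rightarrow> real" where
  "vhat' l \<omega> j = (\<lambda>k. (1 / real l) * (\<Sum>i<l. cvec \<omega> i j k))"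

definition vmean :: "nat \<Rightarrow> nat \<Rightarrow> (nat \<times> nat \<times> nat \<Rightarrow> real) \<Rightarrow> nat \<Rightarrow> real" where
  "vmean l l' \<omega> = (\<lambda>k. (1 / (real l * real l')) * (\<Sum>i<l. \<Sum>j<l'. cvec \<omega> i j k))"

definition base_v :: "nat \<Rightarrow> nat \<Rightarrow> real \<Rightarrow> (nat \<times> nat \<times> nat \<Rightarrow> real) \<Rightarrow> nat \<Rightarrow> nat \<Rightarrow> real" where
  "base_v l l' \<sigma> \<omega> i = (\<lambda>k. (vhat l' \<omega> i k - vmean l l' \<omega> k) / \<sigma>)"

definition base_v' :: "nat \<Rightarrow> nat \<Rightarrow> real \<Rightarrow> (nat \<times> nat \<times> nat \<Rightarrow> real) \<Rightarrow> nat \<Rightarrow> nat \<Rightarrow> real" where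
  "base_v' l l' \<sigma> \<omega> j = (\<lambda>k. (vhat' l \<omega> j k - vmean l l' \<omega> k) / \<sigma>)"

end

theory Submission
  imports Defs
begin

text \<open>Write \<open>\<omega>(p,q,k)\<close> for coordinate \<open>k\<close> of \<open>v\<^sub>p\<^sub>,\<^sub>q\<close>. Coordinate \<open>k\<close> of \<open>\<sigma> v\<^sub>i\<close>
  is a fixed linear combination, with coefficient vector \<open>a\<^sub>i\<close>, of the Gaussians
  \<open>\<omega>(\<cdot>,\<cdot>,k)\<close> of block \<open>k\<close>, and coordinate \<open>k\<close> of \<open>\<sigma> v'\<^sub>j\<close> one with coefficients
  \<open>b\<^sub>j\<close>; distinct blocks are independent.

  Within an attribute the \<open>v\<^sub>i\<close> sum to zero, so \<open>\<Sum>\<^sub>i\<^sub>,\<^sub>i\<^sub>' \<langle>v\<^sub>i, v\<^sub>i\<^sub>'\<rangle> = 0\<close>; if all off-diagonal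
  products vanished then so would every \<open>\<parallel>v\<^sub>i\<parallel>\<^sup>2\<close>, whereas a nontrivial linear combination
  of Gaussians is almost surely nonzero.

  Across attributes, \<open>a\<^sub>i\<close> and \<open>b\<^sub>j\<close> are orthogonal and nonzero. The inner products
  \<open>\<sigma>\<^sup>2\<langle>v\<^sub>i, v'\<^sub>j\<rangle>\<close>, \<open>\<sigma>\<^sup>2\<parallel>v\<^sub>i\<parallel>\<^sup>2\<close>, \<open>\<sigma>\<^sup>2\<parallel>v'\<^sub>j\<parallel>\<^sup>2\<close> are sums of \<open>d\<close> independent block products with
  means \<open>0\<close>, \<open>\<parallel>a\<^sub>i\<parallel>\<^sup>2\<close>, \<open>\<parallel>b\<^sub>j\<parallel>\<^sup>2\<close> and variances bounded via fourth Gaussian moments, so by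
  Chebyshev's inequality they are, divided by \<open>d\<close>, close to these means with probability
  \<open>1 - O(1/d)\<close>; on that event the cosine is below \<open>\<epsilon>\<close>.\<close>

abbreviation std_normal :: "real measure" where
  "std_normal \<equiv> density lborel std_normal_density"

abbreviation gaussians :: "'i set \<Rightarrow> ('i \<Rightarrow> real) measure" where
  "gaussians I \<equiv> PiM I (\<lambda>_. std_normal)"

section \<open>Products of standard Gaussians\<close>

lemma prob_space_std_normal: "prob_space std_normal"
  by (rule prob_space_normal_density) simp

lemma std_normal_power_integral:
  assumes "has_bochner_integral lborel (\<lambda>x. std_normal_density x * x ^ n) v"
  shows "integrable std_normal (\<lambda>x. x ^ n)" "integral\<^sup>L std_normal (\<lambda>x. x ^ n) = v"
proof -
  have m: "(\<lambda>x::real. x ^ n) \<in> borel_measurable lborel" "std_normal_density \<in> borel_measurable lborel"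
    by measurable
  have nonneg: "AE x in lborel. 0 \<le> std_normal_density x"
    by simp
  show "integrable std_normal (\<lambda>x. x ^ n)"
    unfolding integrable_density[OF m nonneg] scaleR_conv_of_real of_real_eq_id id_def
    using assms by (metis has_bochner_integral_iff)
  show "integral\<^sup>L std_normal (\<lambda>x. x ^ n) = v"
    unfolding integral_density[OF m nonneg] scaleR_conv_of_real of_real_eq_id id_def
    using has_bochner_integral_integral_eq[OF assms] .
qed

lemma integrable_std_normal_power: "integrable std_normal (\<lambda>x. x ^ n)"
  by (rule std_normal_power_integral(1)[OF has_bochner_integral_integrable[OF integrable_std_normal_moment]])

lemma std_normal_moments:
  "integral\<^sup>L std_normal (\<lambda>x. x ^ 1) = 0"
  "integral\<^sup>L std_normal (\<lambda>x. x ^ 2) = 1"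
  "integral\<^sup>L std_normal (\<lambda>x. x ^ 4) = 3"
proof -
  have "fact (2 * 2) / (2 ^ 2 * fact 2) = (3::real)"
    by (simp add: fact_numeral)
  then show "integral\<^sup>L std_normal (\<lambda>x. x ^ 4) = 3"
    using std_normal_power_integral(2)[OF std_normal_moment_even[of 2]] by simp
qed (use std_normal_power_integral(2)[OF std_normal_moment_odd[of 0]]
         std_normal_power_integral(2)[OF std_normal_moment_even[of 1]] in simp_all)

lemma emeasure_std_normal_singleton: "emeasure std_normal {p} = 0"
proof -
  have "AE x in lborel. x \<notin> {p}"
    by (rule AE_not_in) auto
  then have "AE x in lborel. x \<in> {p} \<longrightarrow> std_normal_density x = 0"
    by eventually_elim auto
  then have "{p} \<in> null_sets std_normal"
    by (subst null_sets_density_iff) auto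
  then show ?thesis
    by (rule null_setsD1)
qed

lemma product_prob_space_std_normal: "product_prob_space (\<lambda>_. std_normal)"
  by (simp add: product_prob_space_def product_prob_space_axioms_def product_sigma_finite_def
      prob_space_std_normal prob_space_imp_sigma_finite)

lemma prob_space_gaussians: "prob_space (gaussians I)"
proof -
  interpret product_prob_space "\<lambda>_. std_normal" I
    by (rule product_prob_space_std_normal)
  show ?thesis
    by (rule P.prob_space_axioms)
qed

lemma distr_gaussians_component: "x \<in> I \<Longrightarrow> distr (gaussians I) std_normal (\<lambda>\<omega>. \<omega> x) = std_normal"
  by (rule distr_PiM_component) (auto simp: prob_space_std_normal)

lemma gaussians_component_power:
  assumes "x \<in> I"
  shows "integrable (gaussians I) (\<lambda>\<omega>. (\<omega> x) ^ n)"
    "integral\<^sup>L (gaussians I) (\<lambda>\<omega>. (\<omega> x) ^ n) = integral\<^sup>L std_normal (\<lambda>t. t ^ n)"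
proof -
  have m: "(\<lambda>\<omega>. \<omega> x) \<in> measurable (gaussians I) std_normal"
    using assms by (rule measurable_component_singleton)
  have f: "(\<lambda>t::real. t ^ n) \<in> borel_measurable std_normal"
    by measurable
  show "integrable (gaussians I) (\<lambda>\<omega>. (\<omega> x) ^ n)"
    using integrable_distr_eq[OF m f] integrable_std_normal_power distr_gaussians_component[OF assms]
    by simp
  show "integral\<^sup>L (gaussians I) (\<lambda>\<omega>. (\<omega> x) ^ n) = integral\<^sup>L std_normal (\<lambda>t. t ^ n)"
    using integral_distr[OF m f] distr_gaussians_component[OF assms] by simp
qed

lemma indep_vars_gaussians_components:
  assumes "I \<noteq> {}"
  shows "prob_space.indep_vars (gaussians I) (\<lambda>_. std_normal) (\<lambda>x \<omega>. \<omega> x) I"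
proof -
  interpret P: prob_space "gaussians I"
    by (rule prob_space_gaussians)
  have rv: "(\<lambda>\<omega>. \<omega> x) \<in> measurable (gaussians I) std_normal" for x
  proof (cases "x \<in> I")
    case True
    then show ?thesis
      by (rule measurable_component_singleton)
  next
    case False
    then have "(\<lambda>\<omega>. \<omega> x) \<in> measurable (gaussians I) std_normal \<longleftrightarrow>
        (\<lambda>\<omega>. undefined) \<in> measurable (gaussians I) std_normal"
      by (intro measurable_cong) (auto simp: space_PiM PiE_def extensional_def)
    then show ?thesis
      by simp
  qed
  have "distr (gaussians I) (gaussians I) (\<lambda>\<omega>. \<lambda>x\<in>I. \<omega> x) =
      distr (gaussians I) (gaussians I) (\<lambda>\<omega>. \<omega>)"
    by (rule distr_cong) (auto simp: space_PiM PiE_def extensional_restrict)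
  also have "\<dots> = PiM I (\<lambda>x. distr (gaussians I) std_normal (\<lambda>\<omega>. \<omega> x))"
    by (auto intro!: PiM_cong simp: distr_gaussians_component)
  finally show ?thesis
    by (subst P.indep_vars_iff_distr_eq_PiM[OF assms rv])
qed

lemma indep_vars_gaussians_blocks:
  assumes "I \<noteq> {}" "\<And>k. k \<in> K \<Longrightarrow> B k \<subseteq> I" "disjoint_family_on B K"
    "\<And>k. k \<in> K \<Longrightarrow> G k \<in> borel_measurable (gaussians (B k))"
  shows "prob_space.indep_vars (gaussians I) (\<lambda>_. borel) (\<lambda>k \<omega>. G k (restrict \<omega> (B k))) K"
proof -
  interpret P: prob_space "gaussians I"
    by (rule prob_space_gaussians)
  have "P.indep_vars (\<lambda>k. gaussians (B k)) (\<lambda>k \<omega>. restrict (\<lambda>x. \<omega> x) (B k)) K"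
    by (rule P.indep_vars_restrict[OF indep_vars_gaussians_components[OF assms(1)] assms(2,3)])
  from P.indep_vars_compose2[OF this, of G "\<lambda>_. borel"] assms(4)
  show ?thesis
    by simp
qed

lemma (in prob_space) indep_vars_integral_mult:
  fixes Y :: "'k \<Rightarrow> 'a \<Rightarrow> real"
  assumes "indep_vars (\<lambda>_. borel) Y K" "k \<in> K" "m \<in> K" "k \<noteq> m"
    and "integrable M (Y k)" "integrable M (Y m)"
  shows "integrable M (\<lambda>\<omega>. Y k \<omega> * Y m \<omega>)"
    "expectation (\<lambda>\<omega>. Y k \<omega> * Y m \<omega>) = expectation (Y k) * expectation (Y m)"
proof -
  have indep: "indep_vars (\<lambda>_. borel) Y {k, m}"
    by (rule indep_vars_subset[OF assms(1)]) (use assms in auto)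
  have "\<And>i. i \<in> {k, m} \<Longrightarrow> integrable M (Y i)"
    using assms by auto
  from indep_vars_integrable[OF _ indep this] indep_vars_lebesgue_integral[OF _ indep this]
  show "integrable M (\<lambda>\<omega>. Y k \<omega> * Y m \<omega>)"
    "expectation (\<lambda>\<omega>. Y k \<omega> * Y m \<omega>) = expectation (Y k) * expectation (Y m)"
    using \<open>k \<noteq> m\<close> by simp_all
qed

lemma gaussians_components_covariance:
  assumes "x \<in> I" "y \<in> I"
  shows "integrable (gaussians I) (\<lambda>\<omega>. \<omega> x * \<omega> y)"
    "integral\<^sup>L (gaussians I) (\<lambda>\<omega>. \<omega> x * \<omega> y) = (if x = y then 1 else 0)"
proof (atomize (full), cases "x = y")
  case True
  then show "integrable (gaussians I) (\<lambda>\<omega>. \<omega> x * \<omega> y) \<and>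
      integral\<^sup>L (gaussians I) (\<lambda>\<omega>. \<omega> x * \<omega> y) = (if x = y then 1 else 0)"
    using gaussians_component_power[OF assms(1), of 2] std_normal_moments(2)
    by (simp add: power2_eq_square)
next
  case False
  interpret P: prob_space "gaussians I"
    by (rule prob_space_gaussians)
  have "I \<noteq> {}"
    using assms by auto
  moreover have "(\<lambda>t::real. t) \<in> measurable std_normal borel"
    by (rule measurable_ident_sets) simp
  ultimately have "P.indep_vars (\<lambda>_. borel) (\<lambda>x \<omega>. \<omega> x) I"
    using P.indep_vars_compose2[OF indep_vars_gaussians_components, where Y="\<lambda>_ t. t"] by simp
  from P.indep_vars_integral_mult[OF this assms False]
  show "integrable (gaussians I) (\<lambda>\<omega>. \<omega> x * \<omega> y) \<and>
      integral\<^sup>L (gaussians I) (\<lambda>\<omega>. \<omega> x * \<omega> y) = (if x = y then 1 else 0)"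
    using gaussians_component_power[OF assms(1), of 1] gaussians_component_power[OF assms(2), of 1]
      std_normal_moments(1) False by simp
qed

section \<open>Linear combinations of independent standard Gaussians\<close>

definition lin_comb :: "('i \<Rightarrow> real) \<Rightarrow> 'i set \<Rightarrow> ('i \<Rightarrow> real) \<Rightarrow> real" where
  "lin_comb c S \<omega> = (\<Sum>x\<in>S. c x * \<omega> x)"

lemma lin_comb_restrict: "lin_comb c S (restrict \<omega> S) = lin_comb c S \<omega>"
  unfolding lin_comb_def by (intro sum.cong refl) simp

lemma lin_comb_fun_upd:
  assumes "finite S" "x0 \<in> S"
  shows "lin_comb c S (w(x0 := y)) = c x0 * y + (\<Sum>x\<in>S - {x0}. c x * w x)"
proof -
  have "(\<Sum>x\<in>S - {x0}. c x * (w(x0 := y)) x) = (\<Sum>x\<in>S - {x0}. c x * w x)"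
    by (intro sum.cong refl) auto
  then show ?thesis
    unfolding lin_comb_def using assms by (simp add: sum.remove)
qed

lemma borel_measurable_lin_comb:
  assumes "S \<subseteq> I"
  shows "lin_comb c S \<in> borel_measurable (gaussians I)"
  unfolding lin_comb_def[abs_def]
proof (rule borel_measurable_sum)
  fix x assume "x \<in> S"
  then have "x \<in> I"
    using assms by auto
  then show "(\<lambda>\<omega>. c x * \<omega> x) \<in> borel_measurable (gaussians I)"
    by measurable
qed

lemma integral_lin_comb_mult:
  assumes "finite S" "S \<subseteq> I"
  shows "integrable (gaussians I) (\<lambda>\<omega>. lin_comb c S \<omega> * lin_comb c' S \<omega>)"
    "integral\<^sup>L (gaussians I) (\<lambda>\<omega>. lin_comb c S \<omega> * lin_comb c' S \<omega>) = (\<Sum>x\<in>S. c x * c' x)"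
proof -
  have eq: "(\<lambda>\<omega>. lin_comb c S \<omega> * lin_comb c' S \<omega>) =
      (\<lambda>\<omega>. \<Sum>x\<in>S. \<Sum>y\<in>S. c x * c' y * (\<omega> x * \<omega> y))"
    by (rule ext) (simp add: lin_comb_def sum_product mult_ac)
  have int: "integrable (gaussians I) (\<lambda>\<omega>. c x * c' y * (\<omega> x * \<omega> y))" if "x \<in> S" "y \<in> S" for x y
    using gaussians_components_covariance(1)[of x I y] that assms(2) by auto
  show "integrable (gaussians I) (\<lambda>\<omega>. lin_comb c S \<omega> * lin_comb c' S \<omega>)"
    unfolding eq by (intro Bochner_Integration.integrable_sum int)
  have "integral\<^sup>L (gaussians I) (\<lambda>\<omega>. lin_comb c S \<omega> * lin_comb c' S \<omega>) =
      (\<Sum>x\<in>S. \<Sum>y\<in>S. c x * c' y * integral\<^sup>L (gaussians I) (\<lambda>\<omega>. \<omega> x * \<omega> y))"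
    unfolding eq using int
    by (simp add: Bochner_Integration.integral_sum)
  also have "\<dots> = (\<Sum>x\<in>S. \<Sum>y\<in>S. c x * c' y * (if x = y then 1 else 0))"
  proof (intro sum.cong refl)
    fix x y assume "x \<in> S" "y \<in> S"
    with assms(2) show "c x * c' y * integral\<^sup>L (gaussians I) (\<lambda>\<omega>. \<omega> x * \<omega> y) =
        c x * c' y * (if x = y then 1 else 0)"
      by (subst gaussians_components_covariance(2)) auto
  qed
  also have "\<dots> = (\<Sum>x\<in>S. c x * c' x)"
    using assms(1) by (simp add: if_distrib cong: if_cong)
  finally show "integral\<^sup>L (gaussians I) (\<lambda>\<omega>. lin_comb c S \<omega> * lin_comb c' S \<omega>) = (\<Sum>x\<in>S. c x * c' x)" .
qed

lemma sum_mult_square_le_abs_weighted: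
  fixes c z :: "'i \<Rightarrow> real"
  shows "(\<Sum>x\<in>S. c x * z x)\<^sup>2 \<le> (\<Sum>x\<in>S. \<bar>c x\<bar>) * (\<Sum>x\<in>S. \<bar>c x\<bar> * (z x)\<^sup>2)"
proof -
  have pointwise: "c x * z x = sqrt \<bar>c x\<bar> * (sgn (c x) * sqrt \<bar>c x\<bar> * z x)" for x
  proof -
    have "sqrt \<bar>c x\<bar> * (sgn (c x) * sqrt \<bar>c x\<bar> * z x) = sgn (c x) * \<bar>c x\<bar> * z x"
      by (simp add: mult_ac flip: mult.assoc[of "sqrt \<bar>c x\<bar>"])
    then show ?thesis
      by (metis sgn_mult_abs)
  qed
  have "(\<Sum>x\<in>S. c x * z x) = (\<Sum>x\<in>S. sqrt \<bar>c x\<bar> * (sgn (c x) * sqrt \<bar>c x\<bar> * z x))"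
    by (intro sum.cong refl pointwise)
  moreover have "(sgn (c x) * sqrt \<bar>c x\<bar> * z x)\<^sup>2 = \<bar>c x\<bar> * (z x)\<^sup>2" for x
    by (cases "c x = 0") (auto simp: power_mult_distrib sgn_if)
  ultimately show ?thesis
    using Cauchy_Schwarz_ineq_sum[of "\<lambda>x. sqrt \<bar>c x\<bar>" "\<lambda>x. sgn (c x) * sqrt \<bar>c x\<bar> * z x" S]
    by simp
qed

lemma lin_comb_fourth_power_le:
  "(lin_comb c S \<omega>) ^ 4 \<le> (\<Sum>x\<in>S. \<bar>c x\<bar>) ^ 3 * (\<Sum>x\<in>S. \<bar>c x\<bar> * (\<omega> x) ^ 4)"
proof -
  define A where "A = (\<Sum>x\<in>S. \<bar>c x\<bar>)"
  define Q where "Q = (\<Sum>x\<in>S. \<bar>c x\<bar> * (\<omega> x)\<^sup>2)"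
  have "(lin_comb c S \<omega>)\<^sup>2 \<le> A * Q"
    unfolding lin_comb_def A_def Q_def by (rule sum_mult_square_le_abs_weighted)
  moreover have "Q\<^sup>2 \<le> A * (\<Sum>x\<in>S. \<bar>c x\<bar> * (\<omega> x) ^ 4)"
    using sum_mult_square_le_abs_weighted[of "\<lambda>x. \<bar>c x\<bar>" "\<lambda>x. (\<omega> x)\<^sup>2" S]
    unfolding Q_def A_def by (simp add: power_mult[symmetric])
  moreover have "0 \<le> A"
    unfolding A_def by (simp add: sum_nonneg)
  ultimately have "((lin_comb c S \<omega>)\<^sup>2)\<^sup>2 \<le> A\<^sup>2 * (A * (\<Sum>x\<in>S. \<bar>c x\<bar> * (\<omega> x) ^ 4))"
    by (smt (verit, ccfv_SIG) mult_left_mono power_mono power_mult_distrib zero_le_power2)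
  then show ?thesis
    unfolding A_def[symmetric]
    by (simp add: power_mult[symmetric] power3_eq_cube power2_eq_square[of A] mult_ac)
qed

lemma lin_comb_fourth_moment:
  assumes "finite S" "S \<subseteq> I"
  shows "integrable (gaussians I) (\<lambda>\<omega>. (lin_comb c S \<omega>) ^ 4)"
    "integral\<^sup>L (gaussians I) (\<lambda>\<omega>. (lin_comb c S \<omega>) ^ 4) \<le> 3 * (\<Sum>x\<in>S. \<bar>c x\<bar>) ^ 4"
proof -
  define A where "A = (\<Sum>x\<in>S. \<bar>c x\<bar>)"
  define g where "g \<omega> = A ^ 3 * (\<Sum>x\<in>S. \<bar>c x\<bar> * (\<omega> x) ^ 4)" for \<omega>
  have bound: "(lin_comb c S \<omega>) ^ 4 \<le> g \<omega>" for \<omega>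
    unfolding g_def A_def by (rule lin_comb_fourth_power_le)
  have int_summand: "integrable (gaussians I) (\<lambda>\<omega>. \<bar>c x\<bar> * (\<omega> x) ^ 4)" if "x \<in> S" for x
    using that assms(2) gaussians_component_power(1)[of x I 4] by auto
  have int_g: "integrable (gaussians I) g"
    unfolding g_def[abs_def] by (intro integrable_mult_right Bochner_Integration.integrable_sum int_summand)
  have "integral\<^sup>L (gaussians I) g = A ^ 3 * (\<Sum>x\<in>S. \<bar>c x\<bar> * 3)"
    unfolding g_def[abs_def] using int_summand assms(2)
    by (auto simp: Bochner_Integration.integral_sum gaussians_component_power(2) std_normal_moments
        intro!: sum.cong)
  also have "\<dots> = 3 * A ^ 4"
    unfolding A_def sum_distrib_right[symmetric] by (simp add: power_Suc[symmetric] mult_ac del: power_Suc)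
  finally have integral_g: "integral\<^sup>L (gaussians I) g = 3 * A ^ 4" .
  have "(\<lambda>\<omega>. (lin_comb c S \<omega>) ^ 4) \<in> borel_measurable (gaussians I)"
    using borel_measurable_lin_comb[OF assms(2), of c] by measurable
  then show int4: "integrable (gaussians I) (\<lambda>\<omega>. (lin_comb c S \<omega>) ^ 4)"
    by (rule Bochner_Integration.integrable_bound[OF int_g]) (auto intro: order_trans[OF bound abs_ge_self])
  show "integral\<^sup>L (gaussians I) (\<lambda>\<omega>. (lin_comb c S \<omega>) ^ 4) \<le> 3 * (\<Sum>x\<in>S. \<bar>c x\<bar>) ^ 4"
    using Bochner_Integration.integral_mono[OF int4 int_g bound] integral_g unfolding A_def by simp
qed

text \<open>A nontrivial linear combination of independent Gaussians has no atoms: integrating out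
  the coordinate \<open>x0\<close> first, it vanishes for a single value of \<open>\<omega> x0\<close> only.\<close>

lemma AE_lin_comb_ne_zero:
  assumes "finite I" "S \<subseteq> I" "x0 \<in> S" "c x0 \<noteq> 0"
  shows "AE \<omega> in gaussians I. lin_comb c S \<omega> \<noteq> 0"
proof -
  interpret product_prob_space "\<lambda>_. std_normal" I
    by (rule product_prob_space_std_normal)
  define J where "J = I - {x0}"
  have I_eq: "I = insert x0 J" and "x0 \<notin> J" "finite J"
    using assms unfolding J_def by auto
  define Z where "Z = {\<omega> \<in> space (gaussians I). lin_comb c S \<omega> = 0}"
  have Z: "Z \<in> sets (gaussians I)"
    unfolding Z_def using borel_measurable_lin_comb[OF assms(2)] by measurable
  have "emeasure (gaussians I) Z = (\<integral>\<^sup>+ w. (\<integral>\<^sup>+ y. indicator Z (w(x0 := y)) \<partial>std_normal) \<partial>gaussians J)"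
    using Z unfolding I_eq
    by (simp add: product_nn_integral_insert[OF \<open>finite J\<close> \<open>x0 \<notin> J\<close>, symmetric])
  also have "\<dots> = (\<integral>\<^sup>+ w. 0 \<partial>gaussians J)"
  proof (rule nn_integral_cong)
    fix w
    define r where "r = - (\<Sum>x\<in>S - {x0}. c x * w x) / c x0"
    have "indicator Z (w(x0 := y)) \<le> (indicator {r} y :: ennreal)" for y
      using lin_comb_fun_upd[of S x0 c w y] assms finite_subset[OF assms(2,1)]
      by (auto simp: indicator_def Z_def r_def field_simps)
    then have "(\<integral>\<^sup>+ y. indicator Z (w(x0 := y)) \<partial>std_normal) \<le> (\<integral>\<^sup>+ y. indicator {r} y \<partial>std_normal)"
      by (intro nn_integral_mono)
    also have "\<dots> = 0"
      by (simp add: emeasure_std_normal_singleton)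
    finally show "(\<integral>\<^sup>+ y. indicator Z (w(x0 := y)) \<partial>std_normal) = 0"
      by simp
  qed
  finally have "Z \<in> null_sets (gaussians I)"
    using Z by auto
  then show ?thesis
    by (rule AE_I') (auto simp: Z_def)
qed

lemma indep_vars_block_products:
  assumes "I \<noteq> {}" "\<And>k. k \<in> K \<Longrightarrow> B k \<subseteq> I" "disjoint_family_on B K"
  shows "prob_space.indep_vars (gaussians I) (\<lambda>_. borel)
      (\<lambda>k \<omega>. lin_comb c1 (B k) \<omega> * lin_comb c2 (B k) \<omega>) K"
proof -
  interpret P: prob_space "gaussians I"
    by (rule prob_space_gaussians)
  have "(\<lambda>\<omega>. lin_comb c1 (B k) \<omega> * lin_comb c2 (B k) \<omega>) \<in> borel_measurable (gaussians (B k))" for k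
    using borel_measurable_lin_comb[of "B k" "B k" c1, OF subset_refl]
      borel_measurable_lin_comb[of "B k" "B k" c2, OF subset_refl] by measurable
  from indep_vars_gaussians_blocks[OF assms this]
  show ?thesis
    by (simp add: lin_comb_restrict)
qed

section \<open>Chebyshev's inequality for uncorrelated sums\<close>

lemma abs_mult_le_sum_squares: "\<bar>(a::real) * b\<bar> \<le> a\<^sup>2 + b\<^sup>2"
proof -
  have "2 * (\<bar>a\<bar> * \<bar>b\<bar>) \<le> a\<^sup>2 + b\<^sup>2"
    using sum_squares_bound[of "\<bar>a\<bar>" "\<bar>b\<bar>"] by (simp add: mult.assoc)
  moreover have "0 \<le> \<bar>a\<bar> * \<bar>b\<bar>"
    by simp
  ultimately show ?thesis
    unfolding abs_mult by linarith
qed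

lemma integrable_mult_of_square_integrable:
  fixes f g :: "'a \<Rightarrow> real"
  assumes "f \<in> borel_measurable M" "g \<in> borel_measurable M"
    and "integrable M (\<lambda>x. (f x)\<^sup>2)" "integrable M (\<lambda>x. (g x)\<^sup>2)"
  shows "integrable M (\<lambda>x. f x * g x)"
  by (rule Bochner_Integration.integrable_bound[where f="\<lambda>x. (f x)\<^sup>2 + (g x)\<^sup>2"])
     (use assms abs_mult_le_sum_squares in auto)

lemma (in prob_space) expectation_square_sum_uncorrelated:
  fixes Z :: "'k \<Rightarrow> 'a \<Rightarrow> real"
  assumes "finite K"
    and int: "\<And>k m. k \<in> K \<Longrightarrow> m \<in> K \<Longrightarrow> integrable M (\<lambda>\<omega>. Z k \<omega> * Z m \<omega>)"
    and uncorr: "\<And>k m. k \<in> K \<Longrightarrow> m \<in> K \<Longrightarrow> k \<noteq> m \<Longrightarrow> expectation (\<lambda>\<omega>. Z k \<omega> * Z m \<omega>) = 0"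
  shows "integrable M (\<lambda>\<omega>. (\<Sum>k\<in>K. Z k \<omega>)\<^sup>2)"
    "expectation (\<lambda>\<omega>. (\<Sum>k\<in>K. Z k \<omega>)\<^sup>2) = (\<Sum>k\<in>K. expectation (\<lambda>\<omega>. (Z k \<omega>)\<^sup>2))"
proof -
  have square: "(\<lambda>\<omega>. (\<Sum>k\<in>K. Z k \<omega>)\<^sup>2) = (\<lambda>\<omega>. \<Sum>k\<in>K. \<Sum>m\<in>K. Z k \<omega> * Z m \<omega>)"
    by (simp add: power2_eq_square sum_product)
  show "integrable M (\<lambda>\<omega>. (\<Sum>k\<in>K. Z k \<omega>)\<^sup>2)"
    unfolding square by (intro Bochner_Integration.integrable_sum int)
  have "expectation (\<lambda>\<omega>. (\<Sum>k\<in>K. Z k \<omega>)\<^sup>2) = (\<Sum>k\<in>K. \<Sum>m\<in>K. expectation (\<lambda>\<omega>. Z k \<omega> * Z m \<omega>))"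
    unfolding square using int by (simp add: Bochner_Integration.integral_sum)
  also have "\<dots> = (\<Sum>k\<in>K. \<Sum>m\<in>K. if m = k then expectation (\<lambda>\<omega>. (Z k \<omega>)\<^sup>2) else 0)"
    using uncorr by (intro sum.cong refl) (auto simp: power2_eq_square)
  also have "\<dots> = (\<Sum>k\<in>K. expectation (\<lambda>\<omega>. (Z k \<omega>)\<^sup>2))"
    using \<open>finite K\<close> by simp
  finally show "expectation (\<lambda>\<omega>. (\<Sum>k\<in>K. Z k \<omega>)\<^sup>2) = (\<Sum>k\<in>K. expectation (\<lambda>\<omega>. (Z k \<omega>)\<^sup>2))" .
qed

lemma (in prob_space) expectation_square_sum_deviation_le:
  fixes Y :: "nat \<Rightarrow> 'a \<Rightarrow> real"
  assumes meas: "\<And>k. k < d \<Longrightarrow> Y k \<in> borel_measurable M"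
    and square_int: "\<And>k. k < d \<Longrightarrow> integrable M (\<lambda>\<omega>. (Y k \<omega>)\<^sup>2)"
    and square_le: "\<And>k. k < d \<Longrightarrow> expectation (\<lambda>\<omega>. (Y k \<omega>)\<^sup>2) \<le> C"
    and mean: "\<And>k. k < d \<Longrightarrow> expectation (Y k) = \<mu>"
    and uncorr: "\<And>k m. k < d \<Longrightarrow> m < d \<Longrightarrow> k \<noteq> m \<Longrightarrow> expectation (\<lambda>\<omega>. Y k \<omega> * Y m \<omega>) = \<mu>\<^sup>2"
  shows "integrable M (\<lambda>\<omega>. ((\<Sum>k<d. Y k \<omega>) - real d * \<mu>)\<^sup>2)"
    "expectation (\<lambda>\<omega>. ((\<Sum>k<d. Y k \<omega>) - real d * \<mu>)\<^sup>2) \<le> real d * C"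
proof -
  have int: "integrable M (Y k)" if "k < d" for k
    using square_integrable_imp_integrable[OF meas square_int] that by simp
  have int_mult: "integrable M (\<lambda>\<omega>. Y k \<omega> * Y m \<omega>)" if "k < d" "m < d" for k m
    using integrable_mult_of_square_integrable[OF meas meas square_int square_int] that by simp
  define Z where "Z k \<omega> = Y k \<omega> - \<mu>" for k \<omega>
  have Z_mult: "Z k \<omega> * Z m \<omega> = Y k \<omega> * Y m \<omega> - \<mu> * Y k \<omega> - \<mu> * Y m \<omega> + \<mu>\<^sup>2" for k m \<omega>
    unfolding Z_def by (simp add: algebra_simps power2_eq_square)
  have int_Z: "integrable M (\<lambda>\<omega>. Z k \<omega> * Z m \<omega>)" if "k < d" "m < d" for k m
    unfolding Z_mult using int_mult[OF that] int that by simp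
  have expect_Z: "expectation (\<lambda>\<omega>. Z k \<omega> * Z m \<omega>) = expectation (\<lambda>\<omega>. Y k \<omega> * Y m \<omega>) - \<mu>\<^sup>2"
    if "k < d" "m < d" for k m
    unfolding Z_mult using int_mult[OF that] int mean that by (simp add: prob_space power2_eq_square)
  have sum_Z: "(\<Sum>k<d. Z k \<omega>) = (\<Sum>k<d. Y k \<omega>) - real d * \<mu>" for \<omega>
    unfolding Z_def by (simp add: sum_subtractf)
  note Z_sum = expectation_square_sum_uncorrelated[of "{..<d}" Z, unfolded sum_Z]
  show "integrable M (\<lambda>\<omega>. ((\<Sum>k<d. Y k \<omega>) - real d * \<mu>)\<^sup>2)"
    using int_Z expect_Z uncorr by (intro Z_sum(1)) auto
  have "expectation (\<lambda>\<omega>. ((\<Sum>k<d. Y k \<omega>) - real d * \<mu>)\<^sup>2) = (\<Sum>k<d. expectation (\<lambda>\<omega>. (Z k \<omega>)\<^sup>2))"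
    using int_Z expect_Z uncorr by (intro Z_sum(2)) auto
  also have "\<dots> \<le> (\<Sum>k<d. C)"
  proof (intro sum_mono)
    fix k assume "k \<in> {..<d}"
    then have "k < d"
      by simp
    then have "expectation (\<lambda>\<omega>. (Z k \<omega>)\<^sup>2) = expectation (\<lambda>\<omega>. (Y k \<omega>)\<^sup>2) - \<mu>\<^sup>2"
      using expect_Z[of k k] by (simp add: power2_eq_square)
    moreover have "expectation (\<lambda>\<omega>. (Y k \<omega>)\<^sup>2) \<le> C"
      using square_le \<open>k < d\<close> .
    moreover have "0 \<le> \<mu>\<^sup>2"
      by simp
    ultimately show "expectation (\<lambda>\<omega>. (Z k \<omega>)\<^sup>2) \<le> C"
      by linarith
  qed
  finally show "expectation (\<lambda>\<omega>. ((\<Sum>k<d. Y k \<omega>) - real d * \<mu>)\<^sup>2) \<le> real d * C"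
    by simp
qed

lemma (in prob_space) prob_sum_deviation_le:
  fixes Y :: "nat \<Rightarrow> 'a \<Rightarrow> real"
  assumes meas: "\<And>k. k < d \<Longrightarrow> Y k \<in> borel_measurable M"
    and square_int: "\<And>k. k < d \<Longrightarrow> integrable M (\<lambda>\<omega>. (Y k \<omega>)\<^sup>2)"
    and square_le: "\<And>k. k < d \<Longrightarrow> expectation (\<lambda>\<omega>. (Y k \<omega>)\<^sup>2) \<le> C"
    and mean: "\<And>k. k < d \<Longrightarrow> expectation (Y k) = \<mu>"
    and uncorr: "\<And>k m. k < d \<Longrightarrow> m < d \<Longrightarrow> k \<noteq> m \<Longrightarrow> expectation (\<lambda>\<omega>. Y k \<omega> * Y m \<omega>) = \<mu>\<^sup>2"
    and "0 < t" "0 < d"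
  shows "prob {\<omega> \<in> space M. t * real d \<le> \<bar>(\<Sum>k<d. Y k \<omega>) - real d * \<mu>\<bar>} \<le> C / (real d * t\<^sup>2)"
proof -
  note square = expectation_square_sum_deviation_le[OF meas square_int square_le mean uncorr]
  have "prob {\<omega> \<in> space M. t * real d \<le> \<bar>(\<Sum>k<d. Y k \<omega>) - real d * \<mu>\<bar>} \<le>
      expectation (\<lambda>\<omega>. ((\<Sum>k<d. Y k \<omega>) - real d * \<mu>)\<^sup>2) / (t * real d)\<^sup>2"
    using meas \<open>0 < t\<close> \<open>0 < d\<close> by (intro second_moment_method square(1)) auto
  also have "\<dots> \<le> real d * C / (t * real d)\<^sup>2"
    by (intro divide_right_mono square(2) zero_le_power2)
  also have "\<dots> = C / (real d * t\<^sup>2)"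
    using \<open>0 < d\<close> by (simp add: power2_eq_square)
  finally show ?thesis .
qed

lemma (in prob_space) prob_ge_one_minus_bad_events:
  assumes "A \<in> events" "B \<in> events" "C \<in> events" "E \<in> events"
    and "\<And>\<omega>. \<omega> \<in> space M \<Longrightarrow> \<omega> \<notin> A \<Longrightarrow> \<omega> \<notin> B \<Longrightarrow> \<omega> \<notin> C \<Longrightarrow> \<omega> \<in> E"
  shows "1 - (prob A + prob B + prob C) \<le> prob E"
proof -
  have "prob (A \<union> B \<union> C) \<le> prob A + prob B + prob C"
    using assms measure_Un_le[of A M B] measure_Un_le[of "A \<union> B" M C] by auto
  moreover have "prob (space M - (A \<union> B \<union> C)) \<le> prob E"
    using assms by (intro finite_measure_mono) auto
  ultimately show ?thesis
    using assms by (simp add: prob_compl)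
qed

lemma prob_block_products_deviation_le:
  fixes B :: "nat \<Rightarrow> 'i set"
  assumes "finite I" "I \<noteq> {}" "0 < d" "0 < t"
    and B_subset: "\<And>k. k < d \<Longrightarrow> B k \<subseteq> I" and "disjoint_family_on B {..<d}"
    and A1: "\<And>k. k < d \<Longrightarrow> (\<Sum>x\<in>B k. \<bar>c1 x\<bar>) = A1"
    and A2: "\<And>k. k < d \<Longrightarrow> (\<Sum>x\<in>B k. \<bar>c2 x\<bar>) = A2"
    and \<mu>: "\<And>k. k < d \<Longrightarrow> (\<Sum>x\<in>B k. c1 x * c2 x) = \<mu>"
  shows "measure (gaussians I) {\<omega> \<in> space (gaussians I).
      t * real d \<le> \<bar>(\<Sum>k<d. lin_comb c1 (B k) \<omega> * lin_comb c2 (B k) \<omega>) - real d * \<mu>\<bar>}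
    \<le> 3 * (A1 ^ 4 + A2 ^ 4) / (real d * t\<^sup>2)"
proof -
  interpret P: prob_space "gaussians I"
    by (rule prob_space_gaussians)
  have fin: "finite (B k)" if "k < d" for k
    using B_subset[OF that] \<open>finite I\<close> finite_subset by auto
  define Y where "Y k \<omega> = lin_comb c1 (B k) \<omega> * lin_comb c2 (B k) \<omega>" for k \<omega>
  have indep: "P.indep_vars (\<lambda>_. borel) Y {..<d}"
    unfolding Y_def[abs_def] using assms by (intro indep_vars_block_products) auto
  have meas: "Y k \<in> borel_measurable (gaussians I)" if "k < d" for k
    unfolding Y_def[abs_def]
    using borel_measurable_lin_comb[OF B_subset[OF that]] by measurable
  have fourth: "integrable (gaussians I) (\<lambda>\<omega>. (lin_comb c1 (B k) \<omega>) ^ 4 + (lin_comb c2 (B k) \<omega>) ^ 4)"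
    "integral\<^sup>L (gaussians I) (\<lambda>\<omega>. (lin_comb c1 (B k) \<omega>) ^ 4 + (lin_comb c2 (B k) \<omega>) ^ 4)
      \<le> 3 * (A1 ^ 4 + A2 ^ 4)" if "k < d" for k
    using lin_comb_fourth_moment[OF fin[OF that] B_subset[OF that], of c1]
      lin_comb_fourth_moment[OF fin[OF that] B_subset[OF that], of c2] A1[OF that] A2[OF that]
    by simp_all
  have Y_square_le: "(Y k \<omega>)\<^sup>2 \<le> (lin_comb c1 (B k) \<omega>) ^ 4 + (lin_comb c2 (B k) \<omega>) ^ 4" for k \<omega>
    using abs_mult_le_sum_squares[of "(lin_comb c1 (B k) \<omega>)\<^sup>2" "(lin_comb c2 (B k) \<omega>)\<^sup>2"]
    unfolding Y_def by (simp add: power_mult_distrib flip: power_mult)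
  have square_int: "integrable (gaussians I) (\<lambda>\<omega>. (Y k \<omega>)\<^sup>2)" if "k < d" for k
    using meas[OF that] Y_square_le
    by (intro Bochner_Integration.integrable_bound[OF fourth(1)[OF that]]) auto
  have square_le: "P.expectation (\<lambda>\<omega>. (Y k \<omega>)\<^sup>2) \<le> 3 * (A1 ^ 4 + A2 ^ 4)" if "k < d" for k
    using Bochner_Integration.integral_mono[OF square_int[OF that] fourth(1)[OF that] Y_square_le]
      fourth(2)[OF that] by linarith
  have int: "integrable (gaussians I) (Y k)" and mean: "P.expectation (Y k) = \<mu>" if "k < d" for k
    unfolding Y_def[abs_def] using integral_lin_comb_mult[OF fin[OF that] B_subset[OF that]] \<mu>[OF that]
    by simp_all
  have "P.expectation (\<lambda>\<omega>. Y k \<omega> * Y m \<omega>) = \<mu>\<^sup>2" if "k < d" "m < d" "k \<noteq> m" for k m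
    using P.indep_vars_integral_mult(2)[OF indep _ _ \<open>k \<noteq> m\<close> int int] that mean
    by (simp add: power2_eq_square)
  from P.prob_sum_deviation_le[OF meas square_int square_le mean this \<open>0 < t\<close> \<open>0 < d\<close>]
  show ?thesis
    unfolding Y_def .
qed

section \<open>The base-concept representations\<close>

definition coord_block :: "nat \<Rightarrow> nat \<Rightarrow> nat \<Rightarrow> (nat \<times> nat \<times> nat) set" where
  "coord_block l l' k = {..<l} \<times> {..<l'} \<times> {k}"

definition block_comb :: "nat \<Rightarrow> nat \<Rightarrow> (nat \<times> nat \<times> nat \<Rightarrow> real) \<Rightarrow>
    (nat \<times> nat \<times> nat \<Rightarrow> real) \<Rightarrow> nat \<Rightarrow> real" where
  "block_comb l l' c \<omega> k = lin_comb c (coord_block l l' k) \<omega>"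

text \<open>The coefficient vectors \<open>a\<^sub>i\<close> and \<open>b\<^sub>j\<close>: coordinate \<open>k\<close> of \<open>\<sigma> v\<^sub>i\<close> is
  \<open>\<Sum>\<^sub>p\<^sub>,\<^sub>q a\<^sub>i(p,q,k) \<omega>(p,q,k)\<close>, see \<open>base_v_eq_block_comb\<close>.\<close>

definition row_coeff :: "nat \<Rightarrow> nat \<Rightarrow> nat \<Rightarrow> nat \<times> nat \<times> nat \<Rightarrow> real" where
  "row_coeff l l' i x = (if fst x = i then 1 / real l' else 0) - 1 / (real l * real l')"

definition col_coeff :: "nat \<Rightarrow> nat \<Rightarrow> nat \<Rightarrow> nat \<times> nat \<times> nat \<Rightarrow> real" where
  "col_coeff l l' j x = (if fst (snd x) = j then 1 / real l else 0) - 1 / (real l * real l')"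

lemma gauss_space_eq: "gauss_space l l' d = gaussians ({..<l} \<times> {..<l'} \<times> {..<d})"
  unfolding gauss_space_def ..

lemma sum_coord_block: "sum f (coord_block l l' k) = (\<Sum>p<l. \<Sum>q<l'. f (p, q, k))"
  unfolding coord_block_def by (simp add: sum.cartesian_product')

lemma coord_block_subset: "k < d \<Longrightarrow> coord_block l l' k \<subseteq> {..<l} \<times> {..<l'} \<times> {..<d}"
  unfolding coord_block_def by auto

lemma disjoint_family_coord_block: "disjoint_family_on (coord_block l l') K"
  unfolding disjoint_family_on_def coord_block_def by auto

lemma base_v_eq_block_comb:
  assumes "i < l"
  shows "base_v l l' s \<omega> i = (\<lambda>k. block_comb l l' (row_coeff l l' i) \<omega> k / s)"
proof -
  have "vhat l' \<omega> i k - vmean l l' \<omega> k = block_comb l l' (row_coeff l l' i) \<omega> k" for k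
  proof -
    have "block_comb l l' (row_coeff l l' i) \<omega> k =
        (\<Sum>p<l. \<Sum>q<l'. if p = i then \<omega> (p, q, k) / real l' else 0)
        - (\<Sum>p<l. \<Sum>q<l'. \<omega> (p, q, k) / (real l * real l'))"
      unfolding block_comb_def lin_comb_def sum_coord_block row_coeff_def sum_subtractf[symmetric]
      by (intro sum.cong refl) (simp add: field_simps)
    also have "(\<Sum>p<l. \<Sum>q<l'. if p = i then \<omega> (p, q, k) / real l' else 0) = vhat l' \<omega> i k"
      unfolding vhat_def cvec_def using assms
      by (subst sum.swap) (simp add: sum_divide_distrib)
    finally show ?thesis
      unfolding vmean_def cvec_def by (simp add: sum_divide_distrib)
  qed
  then show ?thesis
    unfolding base_v_def by simp
qed

lemma base_v'_eq_block_comb: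
  assumes "j < l'"
  shows "base_v' l l' s \<omega> j = (\<lambda>k. block_comb l l' (col_coeff l l' j) \<omega> k / s)"
proof -
  have "vhat' l \<omega> j k - vmean l l' \<omega> k = block_comb l l' (col_coeff l l' j) \<omega> k" for k
  proof -
    have "block_comb l l' (col_coeff l l' j) \<omega> k =
        (\<Sum>p<l. \<Sum>q<l'. if q = j then \<omega> (p, q, k) / real l else 0)
        - (\<Sum>p<l. \<Sum>q<l'. \<omega> (p, q, k) / (real l * real l'))"
      unfolding block_comb_def lin_comb_def sum_coord_block col_coeff_def sum_subtractf[symmetric]
      by (intro sum.cong refl) (simp add: field_simps)
    also have "(\<Sum>p<l. \<Sum>q<l'. if q = j then \<omega> (p, q, k) / real l else 0) = vhat' l \<omega> j k"
      unfolding vhat'_def cvec_def using assms by (simp add: sum_divide_distrib)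
    finally show ?thesis
      unfolding vmean_def cvec_def by (simp add: sum_divide_distrib)
  qed
  then show ?thesis
    unfolding base_v'_def by simp
qed

lemma sum_base_v:
  assumes "0 < l" "0 < l'"
  shows "(\<Sum>i<l. base_v l l' s \<omega> i k) = 0"
proof -
  have "real l * (x / (real l * real l')) = x / real l'" for x
    using assms by simp
  then have "(\<Sum>i<l. vhat l' \<omega> i k) = real l * vmean l l' \<omega> k"
    unfolding vhat_def vmean_def cvec_def by (simp add: sum_divide_distrib sum_distrib_left)
  then show ?thesis
    unfolding base_v_def by (simp add: sum_divide_distrib[symmetric] sum_subtractf)
qed

lemma sum_base_v':
  assumes "0 < l" "0 < l'"
  shows "(\<Sum>j<l'. base_v' l l' s \<omega> j k) = 0"
proof -
  have "real l' * (x / (real l * real l')) = x / real l" for x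
    using assms by simp
  moreover have "(\<Sum>i<l. \<Sum>j<l'. \<omega> (i, j, k)) = (\<Sum>j<l'. \<Sum>i<l. \<omega> (i, j, k))"
    by (rule sum.swap)
  ultimately have "(\<Sum>j<l'. vhat' l \<omega> j k) = real l' * vmean l l' \<omega> k"
    unfolding vhat'_def vmean_def cvec_def by (simp add: sum_divide_distrib sum_distrib_left)
  then show ?thesis
    unfolding base_v'_def by (simp add: sum_divide_distrib[symmetric] sum_subtractf)
qed

lemma ex_nonorthogonal_pair_if_sum_zero:
  fixes v :: "nat \<Rightarrow> nat \<Rightarrow> real"
  assumes "2 \<le> n" "0 < d" and sum_zero: "\<And>k. k < d \<Longrightarrow> (\<Sum>i<n. v i k) = 0" and "v 0 0 \<noteq> 0"
  shows "\<exists>i<n. \<exists>i'<n. i \<noteq> i' \<and> ipd d (v i) (v i') \<noteq> 0"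
proof (rule ccontr)
  assume "\<not> ?thesis"
  then have orth: "\<And>i i'. i < n \<Longrightarrow> i' < n \<Longrightarrow> i \<noteq> i' \<Longrightarrow> ipd d (v i) (v i') = 0"
    by blast
  have "0 = (\<Sum>k<d. (\<Sum>i<n. v i k) * (\<Sum>i'<n. v i' k))"
    using sum_zero by simp
  also have "\<dots> = (\<Sum>i<n. \<Sum>i'<n. ipd d (v i) (v i'))"
    unfolding ipd_def sum_product by (simp add: sum.swap[of _ "{..<d}"])
  also have "\<dots> = (\<Sum>i<n. ipd d (v i) (v i))"
  proof (rule sum.cong[OF refl])
    fix i assume "i \<in> {..<n}"
    then have "(\<Sum>i'<n. ipd d (v i) (v i')) = (\<Sum>i'<n. if i' = i then ipd d (v i) (v i) else 0)"
      using orth by (intro sum.cong refl) auto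
    then show "(\<Sum>i'<n. ipd d (v i) (v i')) = ipd d (v i) (v i)"
      using \<open>i \<in> {..<n}\<close> by simp
  qed
  also have "\<dots> \<ge> ipd d (v 0) (v 0)"
    using assms(1) by (intro member_le_sum) (auto simp: ipd_def intro!: sum_nonneg)
  also have "ipd d (v 0) (v 0) \<ge> v 0 0 * v 0 0"
    unfolding ipd_def using assms(2) by (intro member_le_sum) auto
  finally have "v 0 0 * v 0 0 \<le> 0"
    by simp
  moreover have "0 < v 0 0 * v 0 0"
    using \<open>v 0 0 \<noteq> 0\<close> by (auto simp: zero_less_mult_iff linorder_neq_iff)
  ultimately show False
    by linarith
qed

lemma row_coeff_ne_zero:
  assumes "2 \<le> l" "2 \<le> l'"
  shows "row_coeff l l' i (i, q, k) \<noteq> 0"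
proof -
  have "1 / (real l * real l') < 1 / real l'"
    using assms by (intro divide_strict_left_mono) auto
  then show ?thesis
    unfolding row_coeff_def using assms by simp
qed

lemma col_coeff_ne_zero:
  assumes "2 \<le> l" "2 \<le> l'"
  shows "col_coeff l l' j (p, j, k) \<noteq> 0"
proof -
  have "1 / (real l * real l') < 1 / real l"
    using assms by (intro divide_strict_left_mono) auto
  then show ?thesis
    unfolding col_coeff_def using assms by simp
qed

lemma AE_base_concepts_nonorthogonal:
  assumes "2 \<le> l" "2 \<le> l'" "0 < s" "1 \<le> d"
  shows "AE \<omega> in gauss_space l l' d.
      (\<exists>i<l. \<exists>i'<l. i \<noteq> i' \<and> ipd d (base_v l l' s \<omega> i) (base_v l l' s \<omega> i') \<noteq> 0) \<and>
      (\<exists>j<l'. \<exists>j'<l'. j \<noteq> j' \<and> ipd d (base_v' l l' s \<omega> j) (base_v' l l' s \<omega> j') \<noteq> 0)"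
proof -
  have block: "coord_block l l' 0 \<subseteq> {..<l} \<times> {..<l'} \<times> {..<d}" "(0, 0, 0) \<in> coord_block l l' 0"
    using assms by (auto simp: coord_block_def)
  have "AE \<omega> in gauss_space l l' d. block_comb l l' (row_coeff l l' 0) \<omega> 0 \<noteq> 0"
    unfolding gauss_space_eq block_comb_def
    using block row_coeff_ne_zero[OF assms(1,2)] by (intro AE_lin_comb_ne_zero) auto
  moreover have "AE \<omega> in gauss_space l l' d. block_comb l l' (col_coeff l l' 0) \<omega> 0 \<noteq> 0"
    unfolding gauss_space_eq block_comb_def
    using block col_coeff_ne_zero[OF assms(1,2)] by (intro AE_lin_comb_ne_zero) auto
  ultimately show ?thesis
  proof eventually_elim
    case (elim \<omega>)
    show ?case
    proof
      show "\<exists>i<l. \<exists>i'<l. i \<noteq> i' \<and> ipd d (base_v l l' s \<omega> i) (base_v l l' s \<omega> i') \<noteq> 0"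
        using assms elim(1) sum_base_v base_v_eq_block_comb[of 0 l]
        by (intro ex_nonorthogonal_pair_if_sum_zero) auto
      show "\<exists>j<l'. \<exists>j'<l'. j \<noteq> j' \<and> ipd d (base_v' l l' s \<omega> j) (base_v' l l' s \<omega> j') \<noteq> 0"
        using assms elim(2) sum_base_v' base_v'_eq_block_comb[of 0 l']
        by (intro ex_nonorthogonal_pair_if_sum_zero) auto
    qed
  qed
qed

lemma sum_coord_block_shift:
  assumes "\<And>p q. f (p, q, k) = f (p, q, 0)"
  shows "sum f (coord_block l l' k) = sum f (coord_block l l' 0)"
  unfolding sum_coord_block using assms by simp

lemma sum_row_coeff_mult_col_coeff:
  assumes "i < l" "0 < l'"
  shows "(\<Sum>x\<in>coord_block l l' k. row_coeff l l' i x * col_coeff l l' j x) = 0"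
proof -
  have "(\<Sum>x\<in>coord_block l l' k. row_coeff l l' i x * col_coeff l l' j x) =
      (\<Sum>p<l. row_coeff l l' i (p, 0, 0)) * (\<Sum>q<l'. col_coeff l l' j (0, q, 0))"
    unfolding sum_coord_block sum_product by (simp add: row_coeff_def col_coeff_def)
  also have "(\<Sum>p<l. row_coeff l l' i (p, 0, 0)) = 0"
    using assms by (simp add: row_coeff_def sum_subtractf)
  finally show ?thesis
    by simp
qed

lemma sum_row_coeff_square_pos:
  assumes "i < l" "2 \<le> l" "2 \<le> l'"
  shows "0 < (\<Sum>x\<in>coord_block l l' 0. row_coeff l l' i x * row_coeff l l' i x)"
  using assms row_coeff_ne_zero[OF assms(2,3), of i 0 0]
  by (intro sum_pos2[where i="(i, 0, 0)"])
     (auto simp: coord_block_def zero_less_mult_iff linorder_neq_iff)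

lemma sum_col_coeff_square_pos:
  assumes "j < l'" "2 \<le> l" "2 \<le> l'"
  shows "0 < (\<Sum>x\<in>coord_block l l' 0. col_coeff l l' j x * col_coeff l l' j x)"
  using assms col_coeff_ne_zero[OF assms(2,3), of j 0 0]
  by (intro sum_pos2[where i="(0, j, 0)"])
     (auto simp: coord_block_def zero_less_mult_iff linorder_neq_iff)

lemma borel_measurable_ipd_block_comb [measurable]:
  "(\<lambda>\<omega>. ipd d (block_comb l l' c1 \<omega>) (block_comb l l' c2 \<omega>)) \<in> borel_measurable (gauss_space l l' d)"
  unfolding ipd_def block_comb_def gauss_space_eq
  using borel_measurable_lin_comb[OF coord_block_subset]
  by (intro borel_measurable_sum borel_measurable_times) auto

definition deviation_event :: "nat \<Rightarrow> nat \<Rightarrow> nat \<Rightarrow> real \<Rightarrow> (nat \<times> nat \<times> nat \<Rightarrow> real) \<Rightarrow>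
    (nat \<times> nat \<times> nat \<Rightarrow> real) \<Rightarrow> real \<Rightarrow> (nat \<times> nat \<times> nat \<Rightarrow> real) set" where
  "deviation_event l l' d t c1 c2 \<mu> = {\<omega> \<in> space (gauss_space l l' d).
    t * real d \<le> \<bar>ipd d (block_comb l l' c1 \<omega>) (block_comb l l' c2 \<omega>) - real d * \<mu>\<bar>}"

lemma sets_deviation_event [measurable]: "deviation_event l l' d t c1 c2 \<mu> \<in> sets (gauss_space l l' d)"
  unfolding deviation_event_def by measurable

lemma measure_deviation_event_tendsto_0:
  assumes "0 < l" "0 < l'" "0 < t"
    and c1: "\<And>p q k. c1 (p, q, k) = c1 (p, q, 0)" and c2: "\<And>p q k. c2 (p, q, k) = c2 (p, q, 0)"
  defines "\<mu> \<equiv> \<Sum>x\<in>coord_block l l' 0. c1 x * c2 x"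
  shows "(\<lambda>d. measure (gauss_space l l' d) (deviation_event l l' d t c1 c2 \<mu>)) \<longlonglongrightarrow> 0"
proof (rule tendsto_sandwich[where f="\<lambda>_. 0"])
  define A1 where "A1 = (\<Sum>x\<in>coord_block l l' 0. \<bar>c1 x\<bar>)"
  define A2 where "A2 = (\<Sum>x\<in>coord_block l l' 0. \<bar>c2 x\<bar>)"
  show "eventually (\<lambda>d. measure (gauss_space l l' d) (deviation_event l l' d t c1 c2 \<mu>)
      \<le> (3 * (A1 ^ 4 + A2 ^ 4) / t\<^sup>2) / real d) sequentially"
  proof (rule eventually_sequentiallyI[of 1])
    fix d :: nat assume "1 \<le> d"
    have "(\<Sum>x\<in>coord_block l l' k. \<bar>c1 x\<bar>) = A1" "(\<Sum>x\<in>coord_block l l' k. \<bar>c2 x\<bar>) = A2"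
      "(\<Sum>x\<in>coord_block l l' k. c1 x * c2 x) = \<mu>" for k
      unfolding A1_def A2_def \<mu>_def by (intro sum_coord_block_shift; metis c1 c2)+
    then have "measure (gauss_space l l' d) (deviation_event l l' d t c1 c2 \<mu>)
        \<le> 3 * (A1 ^ 4 + A2 ^ 4) / (real d * t\<^sup>2)"
      unfolding deviation_event_def gauss_space_eq ipd_def block_comb_def
      using \<open>1 \<le> d\<close> assms(1-3)
      by (intro prob_block_products_deviation_le coord_block_subset disjoint_family_coord_block)
         (auto simp: lessThan_empty_iff)
    then show "measure (gauss_space l l' d) (deviation_event l l' d t c1 c2 \<mu>)
        \<le> (3 * (A1 ^ 4 + A2 ^ 4) / t\<^sup>2) / real d"
      by (simp add: field_simps)
  qed
  show "(\<lambda>d. (3 * (A1 ^ 4 + A2 ^ 4) / t\<^sup>2) / real d) \<longlonglongrightarrow> 0"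
    by (rule lim_const_over_n)
qed auto

lemma ipd_scaled: "ipd d (\<lambda>k. x k / s) (\<lambda>k. y k / s) = ipd d x y / s\<^sup>2"
  unfolding ipd_def by (simp add: sum_divide_distrib power2_eq_square)

lemma abs_cosine_le_of_close_inner_products:
  fixes x y :: "nat \<Rightarrow> real"
  assumes "0 < s" "0 < d" "0 < a" "0 < b"
    and t: "t \<le> a / 2" "t \<le> b / 2" "t \<le> \<epsilon> * sqrt (a * b) / 2"
    and xy: "\<bar>ipd d x y\<bar> < t * real d"
    and xx: "\<bar>ipd d x x - real d * a\<bar> < t * real d"
    and yy: "\<bar>ipd d y y - real d * b\<bar> < t * real d"
  shows "vnorm d (\<lambda>k. x k / s) \<noteq> 0 \<and> vnorm d (\<lambda>k. y k / s) \<noteq> 0 \<and>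
    \<bar>ipd d (\<lambda>k. x k / s) (\<lambda>k. y k / s) / (vnorm d (\<lambda>k. x k / s) * vnorm d (\<lambda>k. y k / s))\<bar> \<le> \<epsilon>"
proof -
  have "t * real d \<le> real d * a / 2" "t * real d \<le> real d * b / 2"
    using t \<open>0 < d\<close> by (simp_all add: field_simps)
  then have xx_ge: "real d * a / 2 \<le> ipd d x x" and yy_ge: "real d * b / 2 \<le> ipd d y y"
    using xx yy by linarith+
  moreover have "0 < real d * a / 2" "0 < real d * b / 2"
    using assms by simp_all
  ultimately have pos: "0 < ipd d x x" "0 < ipd d y y"
    by linarith+
  have vnorm_scaled: "vnorm d (\<lambda>k. z k / s) = sqrt (ipd d z z) / s" for z
    unfolding vnorm_def ipd_scaled using \<open>0 < s\<close> by (simp add: real_sqrt_divide)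
  have square: "real d * a / 2 * (real d * b / 2) = (real d / 2)\<^sup>2 * (a * b)"
    by (simp add: power2_eq_square field_simps)
  have "real d / 2 * sqrt (a * b) = sqrt (real d * a / 2 * (real d * b / 2))"
    unfolding square real_sqrt_mult real_sqrt_abs by simp
  also have "\<dots> \<le> sqrt (ipd d x x * ipd d y y)"
    using xx_ge yy_ge pos assms by (intro real_sqrt_le_mono mult_mono) auto
  finally have norms_ge: "real d / 2 * sqrt (a * b) \<le> sqrt (ipd d x x * ipd d y y)" .
  have "ipd d (\<lambda>k. x k / s) (\<lambda>k. y k / s) / (vnorm d (\<lambda>k. x k / s) * vnorm d (\<lambda>k. y k / s)) =
      ipd d x y / sqrt (ipd d x x * ipd d y y)"
    unfolding ipd_scaled vnorm_scaled real_sqrt_mult using \<open>0 < s\<close> by (simp add: power2_eq_square)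
  moreover have "0 \<le> ipd d x x * ipd d y y"
    using pos by simp
  ultimately have "\<bar>ipd d (\<lambda>k. x k / s) (\<lambda>k. y k / s) / (vnorm d (\<lambda>k. x k / s) * vnorm d (\<lambda>k. y k / s))\<bar> =
      \<bar>ipd d x y\<bar> / sqrt (ipd d x x * ipd d y y)"
    by (simp add: abs_divide)
  also have "\<dots> \<le> (t * real d) / (real d / 2 * sqrt (a * b))"
    using xy norms_ge assms by (intro frac_le) auto
  also have "\<dots> = 2 * t / sqrt (a * b)"
    using \<open>0 < d\<close> by (simp add: field_simps)
  also have "\<dots> \<le> \<epsilon>"
    using t assms by (simp add: field_simps)
  finally show ?thesis
    using pos \<open>0 < s\<close> by (simp add: vnorm_scaled)
qed

lemma measure_cosine_small_ge:
  fixes l l' i j d :: nat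
  defines "a \<equiv> row_coeff l l' i" and "b \<equiv> col_coeff l l' j"
  defines "sa \<equiv> \<Sum>x\<in>coord_block l l' 0. a x * a x" and "sb \<equiv> \<Sum>x\<in>coord_block l l' 0. b x * b x"
  assumes "2 \<le> l" "2 \<le> l'" "i < l" "j < l'" "0 < s" "1 \<le> d"
    and t: "t \<le> sa / 2" "t \<le> sb / 2" "t \<le> \<epsilon> * sqrt (sa * sb) / 2"
  shows "1 - (measure (gauss_space l l' d) (deviation_event l l' d t a b 0)
      + measure (gauss_space l l' d) (deviation_event l l' d t a a sa)
      + measure (gauss_space l l' d) (deviation_event l l' d t b b sb))
    \<le> measure (gauss_space l l' d) {\<omega> \<in> space (gauss_space l l' d).
      vnorm d (base_v l l' s \<omega> i) \<noteq> 0 \<and> vnorm d (base_v' l l' s \<omega> j) \<noteq> 0 \<and>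
      \<bar>ipd d (base_v l l' s \<omega> i) (base_v' l l' s \<omega> j)
        / (vnorm d (base_v l l' s \<omega> i) * vnorm d (base_v' l l' s \<omega> j))\<bar> \<le> \<epsilon>}"
    (is "_ \<le> measure _ ?good")
proof -
  interpret prob_space "gauss_space l l' d"
    unfolding gauss_space_eq by (rule prob_space_gaussians)
  have "0 < sa" "0 < sb"
    unfolding sa_def sb_def a_def b_def using assms
    by (simp_all add: sum_row_coeff_square_pos sum_col_coeff_square_pos)
  have base: "base_v l l' s \<omega> i = (\<lambda>k. block_comb l l' a \<omega> k / s)"
    "base_v' l l' s \<omega> j = (\<lambda>k. block_comb l l' b \<omega> k / s)" for \<omega>
    unfolding a_def b_def using assms by (simp_all add: base_v_eq_block_comb base_v'_eq_block_comb)
  show ?thesis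
  proof (rule prob_ge_one_minus_bad_events)
    show "?good \<in> events"
      unfolding base vnorm_def ipd_scaled by measurable
  next
    fix \<omega> assume "\<omega> \<in> space (gauss_space l l' d)" "\<omega> \<notin> deviation_event l l' d t a b 0"
      "\<omega> \<notin> deviation_event l l' d t a a sa" "\<omega> \<notin> deviation_event l l' d t b b sb"
    then have "\<bar>ipd d (block_comb l l' a \<omega>) (block_comb l l' b \<omega>)\<bar> < t * real d"
      "\<bar>ipd d (block_comb l l' a \<omega>) (block_comb l l' a \<omega>) - real d * sa\<bar> < t * real d"
      "\<bar>ipd d (block_comb l l' b \<omega>) (block_comb l l' b \<omega>) - real d * sb\<bar> < t * real d"
      unfolding deviation_event_def by auto
    with abs_cosine_le_of_close_inner_products[OF \<open>0 < s\<close> _ \<open>0 < sa\<close> \<open>0 < sb\<close> t] assms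
      \<open>\<omega> \<in> space (gauss_space l l' d)\<close>
    show "\<omega> \<in> ?good"
      unfolding base by simp
  qed simp_all
qed

lemma cross_attribute_cosine_tendsto_1:
  assumes "2 \<le> l" "2 \<le> l'" "i < l" "j < l'" and \<sigma>: "\<And>d. 0 < \<sigma> d" and "0 < \<epsilon>"
  shows "(\<lambda>d. measure (gauss_space l l' d) {\<omega> \<in> space (gauss_space l l' d).
      vnorm d (base_v l l' (\<sigma> d) \<omega> i) \<noteq> 0 \<and> vnorm d (base_v' l l' (\<sigma> d) \<omega> j) \<noteq> 0 \<and>
      \<bar>ipd d (base_v l l' (\<sigma> d) \<omega> i) (base_v' l l' (\<sigma> d) \<omega> j)
        / (vnorm d (base_v l l' (\<sigma> d) \<omega> i) * vnorm d (base_v' l l' (\<sigma> d) \<omega> j))\<bar> \<le> \<epsilon>})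
    \<longlonglongrightarrow> 1" (is "(\<lambda>d. measure _ (?good d)) \<longlonglongrightarrow> 1")
proof -
  define a where "a = row_coeff l l' i"
  define b where "b = col_coeff l l' j"
  define sa where "sa = (\<Sum>x\<in>coord_block l l' 0. a x * a x)"
  define sb where "sb = (\<Sum>x\<in>coord_block l l' 0. b x * b x)"
  have "0 < sa" "0 < sb"
    unfolding sa_def sb_def a_def b_def using assms
    by (simp_all add: sum_row_coeff_square_pos sum_col_coeff_square_pos)
  define t where "t = min (min (sa / 2) (sb / 2)) (\<epsilon> * sqrt (sa * sb) / 2)"
  have "0 < t" and t: "t \<le> sa / 2" "t \<le> sb / 2" "t \<le> \<epsilon> * sqrt (sa * sb) / 2"
    unfolding t_def using \<open>0 < sa\<close> \<open>0 < sb\<close> \<open>0 < \<epsilon>\<close> by simp_all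
  let ?dev = "\<lambda>c1 c2 \<mu> d. measure (gauss_space l l' d) (deviation_event l l' d t c1 c2 \<mu>)"
  have invariant: "a (p, q, k) = a (p, q, 0)" "b (p, q, k) = b (p, q, 0)" for p q k
    unfolding a_def b_def row_coeff_def col_coeff_def by simp_all
  have "0 < l" "0 < l'"
    using assms by simp_all
  note dev_tendsto_0 = measure_deviation_event_tendsto_0[OF this \<open>0 < t\<close>]
  have "(\<Sum>x\<in>coord_block l l' 0. a x * b x) = 0"
    unfolding a_def b_def using assms by (intro sum_row_coeff_mult_col_coeff) auto
  then have "(\<lambda>d. ?dev a b 0 d + ?dev a a sa d + ?dev b b sb d) \<longlonglongrightarrow> 0 + 0 + 0"
    using dev_tendsto_0[of a b, OF invariant] dev_tendsto_0[of a a, OF invariant(1,1)]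
      dev_tendsto_0[of b b, OF invariant(2,2)]
    unfolding sa_def sb_def by (intro tendsto_add) simp_all
  then have lower_tendsto: "(\<lambda>d. 1 - (?dev a b 0 d + ?dev a a sa d + ?dev b b sb d)) \<longlonglongrightarrow> 1"
    using tendsto_diff[OF tendsto_const[of 1]] by fastforce
  have lower: "eventually (\<lambda>d. 1 - (?dev a b 0 d + ?dev a a sa d + ?dev b b sb d)
      \<le> measure (gauss_space l l' d) (?good d)) sequentially"
    using assms t unfolding a_def b_def sa_def sb_def
    by (intro eventually_sequentiallyI[of 1] measure_cosine_small_ge) simp_all
  have upper: "eventually (\<lambda>d. measure (gauss_space l l' d) (?good d) \<le> 1) sequentially"
    unfolding gauss_space_eq by (intro always_eventually allI prob_space.prob_le_1 prob_space_gaussians)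
  show ?thesis
    by (rule tendsto_sandwich[OF lower upper lower_tendsto tendsto_const])
qed

theorem theorem1:
  fixes l l' :: nat and \<sigma> :: "nat \<Rightarrow> real"
  assumes "l \<ge> 2" and "l' \<ge> 2" and "\<And>d. \<sigma> d > 0"
  shows "(\<forall>d\<ge>1. AE \<omega> in gauss_space l l' d.
            (\<exists>i<l. \<exists>i'<l. i \<noteq> i' \<and>
               ipd d (base_v l l' (\<sigma> d) \<omega> i) (base_v l l' (\<sigma> d) \<omega> i') \<noteq> 0) \<and>
            (\<exists>j<l'. \<exists>j'<l'. j \<noteq> j' \<and>
               ipd d (base_v' l l' (\<sigma> d) \<omega> j) (base_v' l l' (\<sigma> d) \<omega> j') \<noteq> 0))
       \<and> (\<forall>i<l. \<forall>j<l'. \<forall>\<epsilon>>0.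
            (\<lambda>d. measure (gauss_space l l' d)
                {\<omega> \<in> space (gauss_space l l' d).
                   vnorm d (base_v l l' (\<sigma> d) \<omega> i) \<noteq> 0 \<and>
                   vnorm d (base_v' l l' (\<sigma> d) \<omega> j) \<noteq> 0 \<and>
                   \<bar>ipd d (base_v l l' (\<sigma> d) \<omega> i) (base_v' l l' (\<sigma> d) \<omega> j)
                     / (vnorm d (base_v l l' (\<sigma> d) \<omega> i) * vnorm d (base_v' l l' (\<sigma> d) \<omega> j))\<bar>
                   \<le> \<epsilon>})
            \<longlonglongrightarrow> 1)"
proof (intro conjI allI impI)
  fix d :: nat assume "1 \<le> d"
  with assms show "AE \<omega> in gauss_space l l' d.
      (\<exists>i<l. \<exists>i'<l. i \<noteq> i' \<and> ipd d (base_v l l' (\<sigma> d) \<omega> i) (base_v l l' (\<sigma> d) \<omega> i') \<noteq> 0) \<and>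
      (\<exists>j<l'. \<exists>j'<l'. j \<noteq> j' \<and> ipd d (base_v' l l' (\<sigma> d) \<omega> j) (base_v' l l' (\<sigma> d) \<omega> j') \<noteq> 0)"
    by (intro AE_base_concepts_nonorthogonal)
next
  fix i j :: nat and \<epsilon> :: real
  assume "i < l" "j < l'" "0 < \<epsilon>"
  with assms show "(\<lambda>d. measure (gauss_space l l' d) {\<omega> \<in> space (gauss_space l l' d).
      vnorm d (base_v l l' (\<sigma> d) \<omega> i) \<noteq> 0 \<and> vnorm d (base_v' l l' (\<sigma> d) \<omega> j) \<noteq> 0 \<and>
      \<bar>ipd d (base_v l l' (\<sigma> d) \<omega> i) (base_v' l l' (\<sigma> d) \<omega> j)
        / (vnorm d (base_v l l' (\<sigma> d) \<omega> i) * vnorm d (base_v' l l' (\<sigma> d) \<omega> j))\<bar> \<le> \<epsilon>})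
    \<longlonglongrightarrow> 1"
    by (intro cross_attribute_cosine_tendsto_1)
qed

end
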